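(* In the resource theory of unital maps on a $d$-dimensional Hilbert space with fixed orthonormal basis $\{\ket i\}_{i=1}^d$, let $C^k=\{\Pi^k/k\}$ and $C_2^k=\big(\{\ket i\bra i\}_{1\le i\le k}\big)^{\mathrm P}$ (the convex hull of the first $k$ basis projectors), for $1\le k\le d$. Then for every $k$, $C^k\to C_2^k$ and $C_2^k\to C^k$. In particular $\mathcal C_2=\{C_2^k\}_{k=1}^d\cup\{\Omega\}$ is a currency for $S^\Omega$ with value function $\mathrm{Val}(C_2^k)=\log d-\log k$, $\mathrm{Val}(\Omega)=0$.
   Context: $\Omega$ is the set of density operators on a Hilbert space of dimension $d$; $S^\Omega$ the set of its non-empty subsets; $\Pi^k=\sum_{i=1}^k\ket i\bra i$. Allowed transformations: $f_{\mathcal E}(V)=\{\mathcal E(\rho):\rho\in V\}$ for unital CPTP maps $\mathcal E$; $V\to W$ iff some such $\mathcal E$ has $\mathcal E(\rho)\in W$ for all $\rho\in V$. Logarithms base 2. A subset $\mathcal C$ is a currency for target $\mathcal S$ if (Order) any two elements of $\mathcal C$ are comparable under $\to$ and $\Omega\in\mathcal C$; (Universality) $\Omega\in\mathcal S$ and every $V\in\mathcal S$ has $C,C'\in\mathcal C$ with $C\to V$, $V\to C'$. A value function $\mathrm{Val}:\mathcal C\to\mathbb R_{\ge0}$ satisfies $\mathrm{Val}(C')\ge\mathrm{Val}(C)\iff C'\to C$ and $\mathrm{Val}(\Omega)=0$. *)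

theory Defs
  imports Complex_Main "Jordan_Normal_Form.Matrix"
begin

definition mtrace :: "complex mat \<Rightarrow> complex" where
  "mtrace A = (\<Sum>i<dim_row A. A $$ (i, i))"

definition madj :: "complex mat \<Rightarrow> complex mat" where
  "madj A = mat (dim_col A) (dim_row A) (\<lambda>(i, j). cnj (A $$ (j, i)))"

definition psd :: "nat \<Rightarrow> complex mat \<Rightarrow> bool" where
  "psd n A \<longleftrightarrow> A \<in> carrier_mat n n \<and> A = madj A \<and>
     (\<forall>v :: nat \<Rightarrow> complex. 0 \<le> Re (\<Sum>i<n. \<Sum>j<n. cnj (v i) * A $$ (i, j) * v j))"

definition density_ops :: "nat \<Rightarrow> complex mat set" where
  "density_ops d = {\<rho>. psd d \<rho> \<and> mtrace \<rho> = 1}"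

definition S_Omega :: "nat \<Rightarrow> complex mat set set" where
  "S_Omega d = {V. V \<noteq> {} \<and> V \<subseteq> density_ops d}"

definition linear_on :: "nat \<Rightarrow> (complex mat \<Rightarrow> complex mat) \<Rightarrow> bool" where
  "linear_on d E \<longleftrightarrow>
     (\<forall>A \<in> carrier_mat d d. E A \<in> carrier_mat d d) \<and>
     (\<forall>A \<in> carrier_mat d d. \<forall>B \<in> carrier_mat d d. E (A + B) = E A + E B) \<and>
     (\<forall>A \<in> carrier_mat d d. \<forall>c. E (c \<cdot>\<^sub>m A) = c \<cdot>\<^sub>m E A)"

text \<open>(id_n \<otimes> E) applied to an (n*d) x (n*d) matrix, viewed as an n x n array of d x d blocks.\<close>
definition block_apply :: "nat \<Rightarrow> nat \<Rightarrow> (complex mat \<Rightarrow> complex mat) \<Rightarrow> complex mat \<Rightarrow> complex mat" where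
  "block_apply n d E M = mat (n * d) (n * d) (\<lambda>(r, c).
      E (mat d d (\<lambda>(a, b). M $$ ((r div d) * d + a, (c div d) * d + b))) $$ (r mod d, c mod d))"

definition completely_positive :: "nat \<Rightarrow> (complex mat \<Rightarrow> complex mat) \<Rightarrow> bool" where
  "completely_positive d E \<longleftrightarrow>
     (\<forall>n M. psd (n * d) M \<longrightarrow> psd (n * d) (block_apply n d E M))"

definition trace_preserving :: "nat \<Rightarrow> (complex mat \<Rightarrow> complex mat) \<Rightarrow> bool" where
  "trace_preserving d E \<longleftrightarrow> (\<forall>A \<in> carrier_mat d d. mtrace (E A) = mtrace A)"

definition unital :: "nat \<Rightarrow> (complex mat \<Rightarrow> complex mat) \<Rightarrow> bool" where
  "unital d E \<longleftrightarrow> E (1\<^sub>m d) = 1\<^sub>m d"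

definition unital_channel :: "nat \<Rightarrow> (complex mat \<Rightarrow> complex mat) \<Rightarrow> bool" where
  "unital_channel d E \<longleftrightarrow> linear_on d E \<and> completely_positive d E \<and>
     trace_preserving d E \<and> unital d E"

definition transforms :: "nat \<Rightarrow> complex mat set \<Rightarrow> complex mat set \<Rightarrow> bool" where
  "transforms d V W \<longleftrightarrow> (\<exists>E. unital_channel d E \<and> (\<forall>\<rho> \<in> V. E \<rho> \<in> W))"

text \<open>|i+1><i+1| (0-indexed i).\<close>
definition basis_proj :: "nat \<Rightarrow> nat \<Rightarrow> complex mat" where
  "basis_proj d i = mat d d (\<lambda>(a, b). if a = i \<and> b = i then 1 else 0)"

definition Pi_k :: "nat \<Rightarrow> nat \<Rightarrow> complex mat" where
  "Pi_k d k = mat d d (\<lambda>(a, b). \<Sum>i<k. basis_proj d i $$ (a, b))"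

definition C_set :: "nat \<Rightarrow> nat \<Rightarrow> complex mat set" where
  "C_set d k = {(1 / of_nat k) \<cdot>\<^sub>m Pi_k d k}"

definition C2_set :: "nat \<Rightarrow> nat \<Rightarrow> complex mat set" where
  "C2_set d k = {mat d d (\<lambda>(a, b). \<Sum>i<k. complex_of_real (p i) * basis_proj d i $$ (a, b)) | p.
                   (\<forall>i<k. 0 \<le> p i) \<and> (\<Sum>i<k. p i) = 1}"

definition is_currency :: "nat \<Rightarrow> complex mat set set \<Rightarrow> complex mat set set \<Rightarrow> bool" where
  "is_currency d Cur S \<longleftrightarrow>
     Cur \<subseteq> S_Omega d \<and>
     (\<forall>C \<in> Cur. \<forall>C' \<in> Cur. transforms d C C' \<or> transforms d C' C) \<and>
     density_ops d \<in> Cur \<and>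
     density_ops d \<in> S \<and>
     (\<forall>V \<in> S. \<exists>C \<in> Cur. \<exists>C' \<in> Cur. transforms d C V \<and> transforms d V C')"

definition is_value_function :: "nat \<Rightarrow> complex mat set set \<Rightarrow> (complex mat set \<Rightarrow> real) \<Rightarrow> bool" where
  "is_value_function d Cur Val \<longleftrightarrow>
     (\<forall>C \<in> Cur. 0 \<le> Val C) \<and>
     (\<forall>C \<in> Cur. \<forall>C' \<in> Cur. Val C \<le> Val C' \<longleftrightarrow> transforms d C' C) \<and>
     Val (density_ops d) = 0"

definition Cur2 :: "nat \<Rightarrow> complex mat set set" where
  "Cur2 d = C2_set d ` {1..d} \<union> {density_ops d}"

end

theory Submission
  imports Defs "HOL-Analysis.Convex"
begin

text \<open>
  All channels used are measure-and-prepare maps A \<mapsto> \<Sum>_i A_ii \<sigma>_i, which are unital channels as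
  soon as the \<sigma>_i are states summing to the identity; complete positivity comes from a Gram
  decomposition of each \<sigma>_i. Diagonal \<sigma>_i give the doubly stochastic maps, among them the dephasing
  \<Omega> \<rightarrow> C_2^d and a map C_2^k \<rightarrow> C^k, while \<sigma>_1 = \<sigma>, \<sigma>_i = (1 - \<sigma>)/(d - 1) sends |1\<rangle>\<langle>1| to
  an arbitrary state \<sigma>. Conversely, if a unital channel mapped C_2^k' into C_2^k with k < k', the
  diagonals of the images of |1\<rangle>\<langle>1|, \<dots>, |k'\<rangle>\<langle>k'| would be k' probability vectors supported on
  k points whose coordinatewise sums are at most 1 by unitality, which is impossible. Hence
  C_2^k \<rightarrow> C_2^k' iff k \<le> k', and \<Omega> is equivalent to C_2^d: a total order measured by log d - log k.
\<close>

section \<open>Positive semidefinite kernels\<close>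

text \<open>Matrices are handled as kernels on {0..<n}, so that the Gram decomposition can proceed by
  induction on n.\<close>

definition quad_form :: "nat \<Rightarrow> (nat \<Rightarrow> nat \<Rightarrow> complex) \<Rightarrow> (nat \<Rightarrow> complex) \<Rightarrow> complex" where
  "quad_form n S v = (\<Sum>i<n. \<Sum>j<n. cnj (v i) * S i j * v j)"

definition psd_kernel :: "nat \<Rightarrow> (nat \<Rightarrow> nat \<Rightarrow> complex) \<Rightarrow> bool" where
  "psd_kernel n S \<longleftrightarrow> (\<forall>i<n. \<forall>j<n. S j i = cnj (S i j)) \<and> (\<forall>v. 0 \<le> Re (quad_form n S v))"

lemma psd_kernel_hermitian: "psd_kernel n S \<Longrightarrow> i < n \<Longrightarrow> j < n \<Longrightarrow> S j i = cnj (S i j)"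
  unfolding psd_kernel_def by blast

lemma psd_kernel_quad_form_nonneg: "psd_kernel n S \<Longrightarrow> 0 \<le> Re (quad_form n S v)"
  unfolding psd_kernel_def by blast

lemma cnj_mult_self: "cnj z * z = of_real ((cmod z)\<^sup>2)"
  by (metis complex_norm_square mult.commute of_real_power)

lemma quad_form_cong:
  assumes "\<And>i j. i < n \<Longrightarrow> j < n \<Longrightarrow> S i j = S' i j" and "\<And>i. i < n \<Longrightarrow> v i = w i"
  shows "quad_form n S v = quad_form n S' w"
  unfolding quad_form_def using assms by (intro sum.cong refl) auto

lemma psd_kernel_cong:
  assumes "psd_kernel n S" and "\<And>i j. i < n \<Longrightarrow> j < n \<Longrightarrow> S i j = S' i j"
  shows "psd_kernel n S'"
proof -
  have "quad_form n S' v = quad_form n S v" for v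
    using assms(2) by (intro quad_form_cong) auto
  moreover have "S' j i = cnj (S' i j)" if "i < n" "j < n" for i j
    using psd_kernel_hermitian[OF assms(1) that] assms(2) that by simp
  ultimately show ?thesis
    using assms(1) unfolding psd_kernel_def by metis
qed

lemma quad_form_Suc:
  "quad_form (Suc n) S v = quad_form n S v + (\<Sum>i<n. cnj (v i) * S i n) * v n
     + cnj (v n) * (\<Sum>j<n. S n j * v j) + cnj (v n) * S n n * v n"
  by (simp add: quad_form_def sum.distrib sum_distrib_left sum_distrib_right algebra_simps)

lemma quad_form_unit:
  assumes "a < n"
  shows "quad_form n S (\<lambda>i. if i = a then c else 0) = cnj c * S a a * c"
  using assms unfolding quad_form_def
  by (simp add: if_distrib[of cnj] if_distrib[of "times _"] if_distrib[of "\<lambda>x. x * _"] cong: if_cong)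

lemma quad_form_two:
  assumes "a < n" "b < n" "a \<noteq> b"
  shows "quad_form n S (\<lambda>i. if i = a then x else if i = b then y else 0) =
    cnj x * S a a * x + cnj x * S a b * y + cnj y * S b a * x + cnj y * S b b * y"
proof -
  have split: "(\<lambda>i. if i = a then x else if i = b then y else 0) =
      (\<lambda>i. (if i = a then x else 0) + (if i = b then y else 0))"
    using assms(3) by auto
  show ?thesis
    using assms unfolding split quad_form_def
    by (simp add: ring_distribs sum.distrib if_distrib[of cnj] if_distrib[of "times _"]
        if_distrib[of "\<lambda>x. x * _"] cong: if_cong)
qed

lemma psd_kernel_diag:
  assumes "psd_kernel n S" "a < n"
  shows "S a a = of_real (Re (S a a))" and "0 \<le> Re (S a a)"
proof -
  have "S a a = cnj (S a a)"
    using psd_kernel_hermitian[OF assms(1,2,2)] .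
  then show "S a a = of_real (Re (S a a))"
    by (metis Reals_cnj_iff complex_is_Real_iff of_real_Re)
  show "0 \<le> Re (S a a)"
    using psd_kernel_quad_form_nonneg[OF assms(1), of "\<lambda>i. if i = a then 1 else 0"]
    by (simp add: quad_form_unit[OF assms(2)])
qed

lemma psd_kernel_zero_diag:
  assumes psd: "psd_kernel n S" and "a < n" "b < n" and zero: "S b b = 0"
  shows "S a b = 0"
proof (cases "a = b")
  case True
  with zero show ?thesis by simp
next
  case False
  define s where "s = Re (S a a)"
  define y where "y = S a b"
  define t where "t = 1 / (s + 1)"
  have "0 \<le> s" and saa: "S a a = of_real s"
    using psd_kernel_diag[OF psd \<open>a < n\<close>] by (simp_all add: s_def)
  then have "0 < t" "t * s - 2 < 0"
    by (simp_all add: t_def field_simps)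
  have sba: "S b a = cnj y"
    using psd_kernel_hermitian[OF psd \<open>a < n\<close> \<open>b < n\<close>] by (simp add: y_def)
  \<comment> \<open>for small t > 0 the test vector -t y e_a + e_b would have negative norm unless y = 0\<close>
  have "quad_form n S (\<lambda>i. if i = a then - of_real t * y else if i = b then 1 else 0)
      = of_real t * of_real t * of_real s * (cnj y * y) - 2 * of_real t * (cnj y * y)"
    unfolding quad_form_two[OF \<open>a < n\<close> \<open>b < n\<close> False] saa sba zero y_def[symmetric]
    by (simp add: algebra_simps)
  also have "\<dots> = of_real (t * (cmod y)\<^sup>2 * (t * s - 2))"
    unfolding cnj_mult_self by (simp add: algebra_simps)
  finally have "0 \<le> t * (cmod y)\<^sup>2 * (t * s - 2)"
    using psd_kernel_quad_form_nonneg[OF psd] by (metis Re_complex_of_real)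
  with \<open>0 < t\<close> \<open>t * s - 2 < 0\<close> have "(cmod y)\<^sup>2 \<le> 0"
    by (smt (verit, best) mult_pos_neg zero_le_power2 mult_pos_pos mult_le_0_iff)
  then show ?thesis
    by (simp add: y_def)
qed

lemma psd_kernel_restrict:
  assumes "psd_kernel (Suc n) S"
  shows "psd_kernel n S"
  unfolding psd_kernel_def
proof (intro conjI allI impI)
  fix i j
  assume "i < n" "j < n"
  then show "S j i = cnj (S i j)"
    using psd_kernel_hermitian[OF assms] less_SucI by blast
next
  fix v
  have "quad_form n S v = quad_form n S (v(n := 0))"
    by (rule quad_form_cong) simp_all
  also have "\<dots> = quad_form (Suc n) S (v(n := 0))"
    by (simp add: quad_form_Suc)
  finally show "0 \<le> Re (quad_form n S v)"
    using psd_kernel_quad_form_nonneg[OF assms] by metis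
qed

lemma quad_form_schur_complement:
  assumes psd: "psd_kernel (Suc n) S" and nz: "S n n \<noteq> 0"
  shows "quad_form n (\<lambda>a b. S a b - S a n * S n b / S n n) v =
    quad_form (Suc n) S (v(n := - (\<Sum>j<n. S n j * v j) / S n n))"
proof -
  define B where "B = (\<Sum>j<n. S n j * v j)"
  define w where "w = v(n := - B / S n n)"
  have herm: "S i n = cnj (S n i)" if "i < n" for i
    using psd_kernel_hermitian[OF psd, of n i] that by simp
  have real: "cnj (S n n) = S n n"
    using psd_kernel_hermitian[OF psd, of n n] by simp
  have col: "(\<Sum>i<n. cnj (v i) * S i n) = cnj B"
    unfolding B_def cnj_sum by (intro sum.cong) (simp_all add: herm)
  have "quad_form n (\<lambda>a b. S a b - S a n * S n b / S n n) v
      = quad_form n S v - (\<Sum>i<n. \<Sum>j<n. (cnj (v i) * S i n) * (S n j * v j)) / S n n"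
    unfolding quad_form_def
    by (simp add: algebra_simps diff_divide_distrib sum_subtractf sum_divide_distrib)
  also have "\<dots> = quad_form n S v - cnj B * B / S n n"
    by (simp add: sum_product[symmetric] col B_def)
  also have "\<dots> = quad_form (Suc n) S w"
  proof -
    have "quad_form n S w = quad_form n S v"
      by (rule quad_form_cong) (simp_all add: w_def)
    moreover have "(\<Sum>i<n. cnj (w i) * S i n) = cnj B" "(\<Sum>j<n. S n j * w j) = B"
      using col unfolding B_def w_def by (auto intro: sum.cong)
    ultimately show ?thesis
      using nz real by (simp add: quad_form_Suc w_def field_simps)
  qed
  finally show ?thesis
    by (simp add: w_def B_def)
qed

lemma psd_kernel_schur_complement:
  assumes psd: "psd_kernel (Suc n) S"
  shows "psd_kernel n (\<lambda>a b. S a b - S a n * S n b / S n n)"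
proof (cases "S n n = 0")
  case True
  \<comment> \<open>the division by zero yields 0, so the complement is just the restriction of S\<close>
  show ?thesis
    using psd_kernel_restrict[OF psd] by (rule psd_kernel_cong) (simp add: True)
next
  case False
  show ?thesis
    unfolding psd_kernel_def
  proof (intro conjI allI impI)
    fix i j
    assume "i < n" "j < n"
    have "S j i = cnj (S i j)" "S j n = cnj (S n j)" "S n i = cnj (S i n)" "cnj (S n n) = S n n"
      using psd_kernel_hermitian[OF psd, of i j] psd_kernel_hermitian[OF psd, of n j]
        psd_kernel_hermitian[OF psd, of i n] psd_kernel_hermitian[OF psd, of n n] \<open>i < n\<close> \<open>j < n\<close>
      by simp_all
    then show "S j i - S j n * S n i / S n n = cnj (S i j - S i n * S n j / S n n)"
      by (simp add: mult.commute)
  next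
    fix v
    show "0 \<le> Re (quad_form n (\<lambda>a b. S a b - S a n * S n b / S n n) v)"
      unfolding quad_form_schur_complement[OF psd False]
      by (rule psd_kernel_quad_form_nonneg[OF psd])
  qed
qed

lemma psd_kernel_pivot:
  assumes psd: "psd_kernel (Suc n) S" and "a \<le> n" "b \<le> n" "a = n \<or> b = n"
  shows "S a b = S a n * S n b / S n n"
proof (cases "S n n = 0")
  case True
  have "S a n = 0" "S b n = 0"
    using psd_kernel_zero_diag[OF psd _ _ True] assms(2,3) by simp_all
  moreover have "S n b = cnj (S b n)"
    using psd_kernel_hermitian[OF psd, of b n] assms(3) by simp
  ultimately show ?thesis
    using assms(4) by auto
next
  case False
  then show ?thesis
    using assms(4) by auto
qed

lemma psd_kernel_gram:
  assumes "psd_kernel n S"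
  shows "\<exists>u. \<forall>a<n. \<forall>b<n. S a b = (\<Sum>m<n. u m a * cnj (u m b))"
  using assms
proof (induction n arbitrary: S)
  case 0
  then show ?case by simp
next
  case (Suc n)
  define c where "c = Re (S n n)"
  have snn: "S n n = of_real c" and "0 \<le> c"
    using psd_kernel_diag[OF Suc.prems, of n] by (simp_all add: c_def)
  obtain u where u: "\<forall>a<n. \<forall>b<n. S a b - S a n * S n b / S n n = (\<Sum>m<n. u m a * cnj (u m b))"
    using Suc.IH[OF psd_kernel_schur_complement[OF Suc.prems]] by blast
  \<comment> \<open>Cholesky step: the last Gram vector is column n scaled by 1 / sqrt (S n n), or 0 if the
    pivot vanishes (then x / 0 = 0 and the column is zero)\<close>
  define w where "w m a = (if m < n then if a < n then u m a else 0 else S a n / of_real (sqrt c))" for m a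
  have "S a b = (\<Sum>m<Suc n. w m a * cnj (w m b))" if "a < Suc n" "b < Suc n" for a b
  proof -
    have "of_real (sqrt c) * of_real (sqrt c) = (of_real c :: complex)"
      using \<open>0 \<le> c\<close> by (simp flip: of_real_mult)
    moreover have "cnj (S b n) = S n b"
      using psd_kernel_hermitian[OF Suc.prems, of b n] that(2) by simp
    ultimately have "w n a * cnj (w n b) = S a n * S n b / S n n"
      by (simp add: w_def snn)
    then have sum: "(\<Sum>m<Suc n. w m a * cnj (w m b)) = (\<Sum>m<n. w m a * cnj (w m b)) + S a n * S n b / S n n"
      by simp
    show ?thesis
    proof (cases "a < n \<and> b < n")
      case True
      then have "S a b - S a n * S n b / S n n = (\<Sum>m<n. w m a * cnj (w m b))"
        using u by (simp add: w_def)
      then show ?thesis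
        unfolding sum by (simp only: diff_eq_eq)
    next
      case False
      then have "(\<Sum>m<n. w m a * cnj (w m b)) = 0"
        by (intro sum.neutral) (auto simp: w_def)
      moreover have "S a b = S a n * S n b / S n n"
        using that False by (intro psd_kernel_pivot[OF Suc.prems]) auto
      ultimately show ?thesis
        unfolding sum by simp
    qed
  qed
  then show ?case by blast
qed

lemma sum_gram:
  assumes "\<forall>a<d. \<forall>b<d. S a b = (\<Sum>m<d. u m a * cnj (u m b))"
  shows "(\<Sum>a<d. \<Sum>b<d. cnj (x a) * S a b * z b) =
    (\<Sum>m<d. cnj (\<Sum>a<d. cnj (u m a) * x a) * (\<Sum>b<d. cnj (u m b) * z b))"
proof -
  have "(\<Sum>a<d. \<Sum>b<d. cnj (x a) * S a b * z b) =
      (\<Sum>a<d. \<Sum>b<d. \<Sum>m<d. (u m a * cnj (x a)) * (cnj (u m b) * z b))"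
    using assms by (intro sum.cong refl) (simp add: sum_distrib_left sum_distrib_right mult_ac)
  also have "\<dots> = (\<Sum>m<d. \<Sum>a<d. \<Sum>b<d. (u m a * cnj (x a)) * (cnj (u m b) * z b))"
    by (subst sum.swap) (intro sum.cong refl sum.swap)
  also have "\<dots> = (\<Sum>m<d. cnj (\<Sum>a<d. cnj (u m a) * x a) * (\<Sum>b<d. cnj (u m b) * z b))"
    by (simp add: cnj_sum sum_product)
  finally show ?thesis .
qed

lemma quad_form_gram:
  assumes "\<forall>a<d. \<forall>b<d. S a b = (\<Sum>m<d. u m a * cnj (u m b))"
  shows "quad_form d S v = of_real (\<Sum>m<d. (cmod (\<Sum>a<d. cnj (u m a) * v a))\<^sup>2)"
  unfolding quad_form_def sum_gram[OF assms] of_real_sum cnj_mult_self ..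

lemma Cauchy_Schwarz_ineq_sum_complex:
  fixes x y :: "'a \<Rightarrow> complex"
  shows "(cmod (\<Sum>i\<in>I. x i * y i))\<^sup>2 \<le> (\<Sum>i\<in>I. (cmod (x i))\<^sup>2) * (\<Sum>i\<in>I. (cmod (y i))\<^sup>2)"
proof -
  have "cmod (\<Sum>i\<in>I. x i * y i) \<le> (\<Sum>i\<in>I. cmod (x i) * cmod (y i))"
    by (rule order_trans[OF norm_sum]) (simp add: norm_mult)
  then have "(cmod (\<Sum>i\<in>I. x i * y i))\<^sup>2 \<le> (\<Sum>i\<in>I. cmod (x i) * cmod (y i))\<^sup>2"
    by (intro power_mono) auto
  also have "\<dots> \<le> (\<Sum>i\<in>I. (cmod (x i))\<^sup>2) * (\<Sum>i\<in>I. (cmod (y i))\<^sup>2)"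
    by (rule Cauchy_Schwarz_ineq_sum)
  finally show ?thesis .
qed

lemma psd_kernel_quad_form_le_trace:
  assumes "psd_kernel d S"
  shows "Re (quad_form d S v) \<le> Re (\<Sum>a<d. S a a) * (\<Sum>a<d. (cmod (v a))\<^sup>2)"
proof -
  obtain u where u: "\<forall>a<d. \<forall>b<d. S a b = (\<Sum>m<d. u m a * cnj (u m b))"
    using psd_kernel_gram[OF assms] by blast
  have "(\<Sum>a<d. S a a) = of_real (\<Sum>a<d. \<Sum>m<d. (cmod (u m a))\<^sup>2)"
    unfolding of_real_sum by (intro sum.cong refl) (simp add: u mult.commute[of "u _ _"] cnj_mult_self)
  also have "(\<Sum>a<d. \<Sum>m<d. (cmod (u m a))\<^sup>2) = (\<Sum>m<d. \<Sum>a<d. (cmod (u m a))\<^sup>2)"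
    by (rule sum.swap)
  finally have trace: "Re (\<Sum>a<d. S a a) = (\<Sum>m<d. \<Sum>a<d. (cmod (u m a))\<^sup>2)"
    by simp
  have "(cmod (\<Sum>a<d. cnj (u m a) * v a))\<^sup>2 \<le> (\<Sum>a<d. (cmod (u m a))\<^sup>2) * (\<Sum>a<d. (cmod (v a))\<^sup>2)" for m
    using Cauchy_Schwarz_ineq_sum_complex[of "\<lambda>a. cnj (u m a)" v "{..<d}"] by simp
  then have "(\<Sum>m<d. (cmod (\<Sum>a<d. cnj (u m a) * v a))\<^sup>2) \<le>
      (\<Sum>m<d. (\<Sum>a<d. (cmod (u m a))\<^sup>2) * (\<Sum>a<d. (cmod (v a))\<^sup>2))"
    by (rule sum_mono)
  then show ?thesis
    unfolding quad_form_gram[OF u] trace by (simp add: sum_distrib_right)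
qed

lemma psd_kernel_sum:
  assumes "\<And>i. i \<in> I \<Longrightarrow> psd_kernel n (S i)"
  shows "psd_kernel n (\<lambda>a b. \<Sum>i\<in>I. S i a b)"
  unfolding psd_kernel_def
proof (intro conjI allI impI)
  fix a b
  assume "a < n" "b < n"
  then have "S i b a = cnj (S i a b)" if "i \<in> I" for i
    using assms[OF that] psd_kernel_hermitian by blast
  then show "(\<Sum>i\<in>I. S i b a) = cnj (\<Sum>i\<in>I. S i a b)"
    unfolding cnj_sum by (intro sum.cong) auto
next
  fix v
  have "quad_form n (\<lambda>a b. \<Sum>i\<in>I. S i a b) v = (\<Sum>i\<in>I. quad_form n (S i) v)"
    unfolding quad_form_def by (simp add: sum_distrib_left sum_distrib_right sum.swap[of _ I])
  then show "0 \<le> Re (quad_form n (\<lambda>a b. \<Sum>i\<in>I. S i a b) v)"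
    using assms psd_kernel_quad_form_nonneg by (simp add: Re_sum sum_nonneg)
qed

lemma psd_kernel_scale:
  assumes "psd_kernel n S" and "0 \<le> c"
  shows "psd_kernel n (\<lambda>a b. of_real c * S a b)"
  unfolding psd_kernel_def
proof (intro conjI allI impI)
  fix a b
  assume "a < n" "b < n"
  then show "of_real c * S b a = cnj (of_real c * S a b)"
    using psd_kernel_hermitian[OF assms(1), of a b] by simp
next
  fix v
  have "quad_form n (\<lambda>a b. of_real c * S a b) v = of_real c * quad_form n S v"
    unfolding quad_form_def by (simp add: sum_distrib_left mult_ac)
  then show "0 \<le> Re (quad_form n (\<lambda>a b. of_real c * S a b) v)"
    using psd_kernel_quad_form_nonneg[OF assms(1)] assms(2) by simp
qed

lemma sum_split_blocks:
  fixes f :: "nat \<Rightarrow> 'a::comm_monoid_add"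
  shows "(\<Sum>r<n * d. f r) = (\<Sum>R<n. \<Sum>a<d. f (R * d + a))"
proof (induction n)
  case 0
  then show ?case by simp
next
  case (Suc n)
  have "{..<Suc n * d} = {..<n * d} \<union> {n * d..<n * d + d}"
    by auto
  moreover have "(\<Sum>r\<in>{n * d..<n * d + d}. f r) = (\<Sum>a<d. f (n * d + a))"
    by (rule sum.reindex_bij_witness[where j="\<lambda>r. r - n * d" and i="\<lambda>a. n * d + a"]) auto
  ultimately show ?case
    using Suc by (simp add: sum.union_disjoint ivl_disj_int)
qed

lemma block_index_less:
  assumes "(R::nat) < n" "a < d"
  shows "R * d + a < n * d"
proof -
  have "R * d + a < Suc R * d"
    using assms(2) by simp
  also have "\<dots> \<le> n * d"
    using assms(1) by (intro mult_le_mono1) simp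
  finally show ?thesis .
qed

lemma psd_kernel_kronecker:
  assumes K: "psd_kernel n K" and S: "psd_kernel d S"
  shows "psd_kernel (n * d) (\<lambda>r c. K (r div d) (c div d) * S (r mod d) (c mod d))"
    (is "psd_kernel _ ?T")
  unfolding psd_kernel_def
proof (intro conjI allI impI)
  fix r c
  assume "r < n * d" "c < n * d"
  moreover have "0 < d"
    using \<open>r < n * d\<close> by (cases d) auto
  ultimately have "r div d < n" "c div d < n" "r mod d < d" "c mod d < d"
    by (auto simp: less_mult_imp_div_less)
  then show "?T c r = cnj (?T r c)"
    using psd_kernel_hermitian[OF K, of "r div d" "c div d"]
      psd_kernel_hermitian[OF S, of "r mod d" "c mod d"] by simp
next
  fix v
  obtain u where u: "\<forall>a<d. \<forall>b<d. S a b = (\<Sum>m<d. u m a * cnj (u m b))"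
    using psd_kernel_gram[OF S] by blast
  define y where "y m R = (\<Sum>b<d. cnj (u m b) * v (R * d + b))" for m R
  have "quad_form (n * d) ?T v =
      (\<Sum>R<n. \<Sum>a<d. \<Sum>C<n. \<Sum>b<d. K R C * (cnj (v (R * d + a)) * S a b * v (C * d + b)))"
    unfolding quad_form_def sum_split_blocks by (intro sum.cong refl) (simp add: mult_ac)
  also have "\<dots> = (\<Sum>R<n. \<Sum>C<n. K R C * (\<Sum>a<d. \<Sum>b<d. cnj (v (R * d + a)) * S a b * v (C * d + b)))"
    unfolding sum_distrib_left by (intro sum.cong refl sum.swap)
  also have "\<dots> = (\<Sum>R<n. \<Sum>C<n. K R C * (\<Sum>m<d. cnj (y m R) * y m C))"
    unfolding y_def sum_gram[OF u] ..
  also have "\<dots> = (\<Sum>R<n. \<Sum>C<n. \<Sum>m<d. cnj (y m R) * K R C * y m C)"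
    by (simp add: sum_distrib_left mult_ac)
  also have "\<dots> = (\<Sum>m<d. quad_form n K (y m))"
    unfolding quad_form_def by (subst sum.swap) (intro sum.cong refl sum.swap)
  finally show "0 \<le> Re (quad_form (n * d) ?T v)"
    using psd_kernel_quad_form_nonneg[OF K] by (simp add: Re_sum sum_nonneg)
qed

lemma psd_kernel_block_compress:
  assumes M: "psd_kernel (n * d) M" and "i < d"
  shows "psd_kernel n (\<lambda>R C. M (R * d + i) (C * d + i))"
  unfolding psd_kernel_def
proof (intro conjI allI impI)
  fix R C
  assume "R < n" "C < n"
  then show "M (C * d + i) (R * d + i) = cnj (M (R * d + i) (C * d + i))"
    using psd_kernel_hermitian[OF M] block_index_less \<open>i < d\<close> by blast
next
  fix w :: "nat \<Rightarrow> complex"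
  define x where "x r = (if r mod d = i then w (r div d) else 0)" for r
  have x: "x (R * d + a) = (if a = i then w R else 0)" if "a < d" for R a
    using that by (simp add: x_def)
  have "quad_form (n * d) M x =
      (\<Sum>R<n. \<Sum>a<d. \<Sum>C<n. \<Sum>b<d. cnj (x (R * d + a)) * M (R * d + a) (C * d + b) * x (C * d + b))"
    unfolding quad_form_def sum_split_blocks ..
  also have "\<dots> = (\<Sum>R<n. \<Sum>a<d. if a = i then \<Sum>C<n. cnj (w R) * M (R * d + i) (C * d + i) * w C else 0)"
    using \<open>i < d\<close> by (intro sum.cong refl)
      (simp add: x if_distrib[of cnj] if_distrib[of "times _"] if_distrib[of "\<lambda>x. x * _"] cong: if_cong)
  also have "\<dots> = quad_form n (\<lambda>R C. M (R * d + i) (C * d + i)) w"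
    using \<open>i < d\<close> by (simp add: quad_form_def)
  finally show "0 \<le> Re (quad_form n (\<lambda>R C. M (R * d + i) (C * d + i)) w)"
    using psd_kernel_quad_form_nonneg[OF M] by metis
qed

lemma madj_eq_iff:
  assumes A: "A \<in> carrier_mat n n"
  shows "A = madj A \<longleftrightarrow> (\<forall>i<n. \<forall>j<n. A $$ (j, i) = cnj (A $$ (i, j)))"
proof -
  have "madj A $$ (i, j) = cnj (A $$ (j, i))" if "i < n" "j < n" for i j
    using A that by (simp add: madj_def)
  moreover have "madj A \<in> carrier_mat n n"
    using A by (simp add: madj_def)
  ultimately show ?thesis
    using A by (metis (no_types, lifting) carrier_matD eq_matI)
qed

lemma psd_iff_psd_kernel: "psd n A \<longleftrightarrow> A \<in> carrier_mat n n \<and> psd_kernel n (\<lambda>i j. A $$ (i, j))"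
  unfolding psd_def psd_kernel_def quad_form_def using madj_eq_iff by blast

lemma psd_kernel_id_minus_density:
  assumes "\<sigma> \<in> density_ops d"
  shows "psd_kernel d (\<lambda>a b. (if a = b then 1 else 0) - \<sigma> $$ (a, b))"
proof -
  have psd: "psd_kernel d (\<lambda>a b. \<sigma> $$ (a, b))" and "mtrace \<sigma> = 1" "dim_row \<sigma> = d"
    using assms by (auto simp: density_ops_def psd_iff_psd_kernel)
  then have trace: "Re (\<Sum>a<d. \<sigma> $$ (a, a)) = 1"
    by (simp add: mtrace_def)
  show ?thesis
    unfolding psd_kernel_def
  proof (intro conjI allI impI)
    fix a b
    assume "a < d" "b < d"
    then show "(if b = a then 1 else 0) - \<sigma> $$ (b, a) = cnj ((if a = b then 1 else 0) - \<sigma> $$ (a, b))"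
      using psd_kernel_hermitian[OF psd, of a b] by simp
  next
    fix v
    have "quad_form d (\<lambda>a b. (if a = b then 1 else 0) - \<sigma> $$ (a, b)) v =
        of_real (\<Sum>a<d. (cmod (v a))\<^sup>2) - quad_form d (\<lambda>a b. \<sigma> $$ (a, b)) v"
      unfolding quad_form_def of_real_sum
      by (simp add: right_diff_distrib left_diff_distrib sum_subtractf if_distrib[of "times _"]
          if_distrib[of "\<lambda>x. x * _"] cnj_mult_self cong: if_cong)
    then show "0 \<le> Re (quad_form d (\<lambda>a b. (if a = b then 1 else 0) - \<sigma> $$ (a, b)) v)"
      using psd_kernel_quad_form_le_trace[OF psd, of v] trace by simp
  qed
qed

section \<open>Unital channels\<close>

lemma block_apply_one:
  assumes "A \<in> carrier_mat d d" and "E A \<in> carrier_mat d d"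
  shows "block_apply 1 d E A = E A"
proof -
  have "mat d d (\<lambda>(a, b). A $$ (0 * d + a, 0 * d + b)) = A"
    by (rule eq_matI) (use assms(1) in auto)
  then show ?thesis
    by (intro eq_matI) (use assms(2) in \<open>auto simp: block_apply_def\<close>)
qed

lemma completely_positive_psd:
  assumes "completely_positive d E" "linear_on d E" "psd d A"
  shows "psd d (E A)"
proof -
  have "A \<in> carrier_mat d d" "E A \<in> carrier_mat d d"
    using assms(2,3) unfolding psd_def linear_on_def by auto
  moreover have "psd (1 * d) (block_apply 1 d E A)"
    using assms(1,3) unfolding completely_positive_def by (metis mult_1)
  ultimately show ?thesis
    by (metis block_apply_one mult_1)
qed

lemma linear_on_zero:
  assumes "linear_on d E"
  shows "E (0\<^sub>m d d) = 0\<^sub>m d d"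
proof -
  have "E (0\<^sub>m d d) = E (0 \<cdot>\<^sub>m 0\<^sub>m d d)"
    by simp
  also have "\<dots> = 0 \<cdot>\<^sub>m E (0\<^sub>m d d)"
    using assms unfolding linear_on_def by (meson zero_carrier_mat)
  also have "\<dots> = 0\<^sub>m d d"
  proof -
    have "E (0\<^sub>m d d) \<in> carrier_mat d d"
      using assms zero_carrier_mat unfolding linear_on_def by blast
    then show ?thesis
      by (intro eq_matI) auto
  qed
  finally show ?thesis .
qed

lemma linear_on_Pi_k_index:
  assumes E: "linear_on d E" and "a < d" "b < d"
  shows "E (Pi_k d j) $$ (a, b) = (\<Sum>i<j. E (basis_proj d i) $$ (a, b))"
proof (induction j)
  case 0
  have "Pi_k d 0 = 0\<^sub>m d d"
    by (intro eq_matI) (simp_all add: Pi_k_def)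
  then show ?case
    using assms by (simp add: linear_on_zero)
next
  case (Suc j)
  have "Pi_k d (Suc j) = Pi_k d j + basis_proj d j"
    by (intro eq_matI) (simp_all add: Pi_k_def basis_proj_def)
  moreover have "Pi_k d j \<in> carrier_mat d d" "basis_proj d j \<in> carrier_mat d d"
    by (simp_all add: Pi_k_def basis_proj_def)
  ultimately have "E (Pi_k d (Suc j)) = E (Pi_k d j) + E (basis_proj d j)"
    using E unfolding linear_on_def by simp
  moreover have "E (Pi_k d j) \<in> carrier_mat d d" "E (basis_proj d j) \<in> carrier_mat d d"
    using E \<open>Pi_k d j \<in> carrier_mat d d\<close> \<open>basis_proj d j \<in> carrier_mat d d\<close>
    unfolding linear_on_def by simp_all
  ultimately show ?case
    using Suc assms(2,3) by simp
qed

lemma block_apply_id: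
  assumes "M \<in> carrier_mat (n * d) (n * d)"
  shows "block_apply n d id M = M"
proof (rule eq_matI)
  fix r c
  assume "r < dim_row M" "c < dim_col M"
  then have "r < n * d" "c < n * d" "0 < d"
    using assms by (auto intro: gr0I)
  then show "block_apply n d id M $$ (r, c) = M $$ (r, c)"
    by (simp add: block_apply_def)
qed (use assms in \<open>simp_all add: block_apply_def\<close>)

lemma unital_channel_id: "unital_channel d id"
  unfolding unital_channel_def linear_on_def completely_positive_def trace_preserving_def unital_def
  by (auto simp: block_apply_id psd_def)

lemma transforms_mono: "transforms d V W \<Longrightarrow> V' \<subseteq> V \<Longrightarrow> W \<subseteq> W' \<Longrightarrow> transforms d V' W'"
  unfolding transforms_def by blast

lemma transforms_subset: "V \<subseteq> W \<Longrightarrow> transforms d V W"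
  unfolding transforms_def using unital_channel_id by fastforce

text \<open>Measure in the basis and prepare \<sigma> i on outcome i.\<close>

definition measure_prepare :: "nat \<Rightarrow> (nat \<Rightarrow> complex mat) \<Rightarrow> complex mat \<Rightarrow> complex mat" where
  "measure_prepare d \<sigma> A = mat d d (\<lambda>(a, b). \<Sum>i<d. A $$ (i, i) * \<sigma> i $$ (a, b))"

lemma measure_prepare_index:
  "a < d \<Longrightarrow> b < d \<Longrightarrow> measure_prepare d \<sigma> A $$ (a, b) = (\<Sum>i<d. A $$ (i, i) * \<sigma> i $$ (a, b))"
  unfolding measure_prepare_def by simp

lemma measure_prepare_dim [simp]:
  "dim_row (measure_prepare d \<sigma> A) = d" "dim_col (measure_prepare d \<sigma> A) = d"
  unfolding measure_prepare_def by simp_all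

lemma linear_on_measure_prepare: "linear_on d (measure_prepare d \<sigma>)"
  unfolding linear_on_def
proof (intro conjI ballI allI)
  fix A :: "complex mat"
  show "measure_prepare d \<sigma> A \<in> carrier_mat d d"
    by (intro carrier_matI) simp_all
next
  fix A B :: "complex mat"
  assume "A \<in> carrier_mat d d" "B \<in> carrier_mat d d"
  then show "measure_prepare d \<sigma> (A + B) = measure_prepare d \<sigma> A + measure_prepare d \<sigma> B"
    by (intro eq_matI) (simp_all add: measure_prepare_index sum.distrib distrib_right)
next
  fix A :: "complex mat" and c :: complex
  assume "A \<in> carrier_mat d d"
  then show "measure_prepare d \<sigma> (c \<cdot>\<^sub>m A) = c \<cdot>\<^sub>m measure_prepare d \<sigma> A"
    by (intro eq_matI) (simp_all add: measure_prepare_index sum_distrib_left mult.assoc)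
qed

lemma block_apply_measure_prepare_index:
  assumes "r < n * d" "c < n * d"
  shows "block_apply n d (measure_prepare d \<sigma>) M $$ (r, c) =
    (\<Sum>i<d. M $$ (r div d * d + i, c div d * d + i) * \<sigma> i $$ (r mod d, c mod d))"
proof -
  have "0 < d"
    using assms(1) by (cases d) auto
  then show ?thesis
    using assms by (simp add: block_apply_def measure_prepare_index)
qed

lemma completely_positive_measure_prepare:
  assumes "\<And>i. i < d \<Longrightarrow> psd d (\<sigma> i)"
  shows "completely_positive d (measure_prepare d \<sigma>)"
  unfolding completely_positive_def
proof (intro allI impI)
  fix n M
  assume M: "psd (n * d) M"
  \<comment> \<open>the block kernel is the sum over i of (i-th diagonal compression of M) \<otimes> \<sigma> i\<close>
  have "psd_kernel (n * d) (\<lambda>r c. \<Sum>i<d. M $$ (r div d * d + i, c div d * d + i) * \<sigma> i $$ (r mod d, c mod d))"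
  proof (rule psd_kernel_sum)
    fix i
    assume "i \<in> {..<d}"
    then have "psd_kernel n (\<lambda>R C. M $$ (R * d + i, C * d + i))" "psd_kernel d (\<lambda>a b. \<sigma> i $$ (a, b))"
      using M assms psd_iff_psd_kernel psd_kernel_block_compress by auto
    from psd_kernel_kronecker[OF this]
    show "psd_kernel (n * d) (\<lambda>r c. M $$ (r div d * d + i, c div d * d + i) * \<sigma> i $$ (r mod d, c mod d))"
      by simp
  qed
  then have "psd_kernel (n * d) (\<lambda>r c. block_apply n d (measure_prepare d \<sigma>) M $$ (r, c))"
    by (rule psd_kernel_cong) (simp add: block_apply_measure_prepare_index)
  then show "psd (n * d) (block_apply n d (measure_prepare d \<sigma>) M)"
    by (simp add: psd_iff_psd_kernel block_apply_def)
qed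

lemma trace_preserving_measure_prepare:
  assumes "\<And>i. i < d \<Longrightarrow> \<sigma> i \<in> carrier_mat d d" and "\<And>i. i < d \<Longrightarrow> mtrace (\<sigma> i) = 1"
  shows "trace_preserving d (measure_prepare d \<sigma>)"
  unfolding trace_preserving_def
proof
  fix A :: "complex mat"
  assume "A \<in> carrier_mat d d"
  have "mtrace (measure_prepare d \<sigma> A) = (\<Sum>a<d. \<Sum>i<d. A $$ (i, i) * \<sigma> i $$ (a, a))"
    unfolding mtrace_def by (simp add: measure_prepare_index)
  also have "\<dots> = (\<Sum>i<d. A $$ (i, i) * mtrace (\<sigma> i))"
    by (subst sum.swap) (intro sum.cong refl; use assms(1) in \<open>auto simp: mtrace_def sum_distrib_left\<close>)
  also have "\<dots> = mtrace A"
    using assms(2) \<open>A \<in> carrier_mat d d\<close> by (simp add: mtrace_def)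
  finally show "mtrace (measure_prepare d \<sigma> A) = mtrace A" .
qed

lemma unital_channel_measure_prepare:
  assumes psd: "\<And>i. i < d \<Longrightarrow> psd d (\<sigma> i)" and trace: "\<And>i. i < d \<Longrightarrow> mtrace (\<sigma> i) = 1"
    and sum: "\<And>a b. a < d \<Longrightarrow> b < d \<Longrightarrow> (\<Sum>i<d. \<sigma> i $$ (a, b)) = (if a = b then 1 else 0)"
  shows "unital_channel d (measure_prepare d \<sigma>)"
proof -
  have "trace_preserving d (measure_prepare d \<sigma>)"
    using psd trace by (intro trace_preserving_measure_prepare) (auto simp: psd_def)
  moreover have "unital d (measure_prepare d \<sigma>)"
    unfolding unital_def using sum by (auto intro!: eq_matI simp: measure_prepare_index)
  moreover have "completely_positive d (measure_prepare d \<sigma>)"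
    using psd by (rule completely_positive_measure_prepare)
  ultimately show ?thesis
    unfolding unital_channel_def using linear_on_measure_prepare by blast
qed

lemma sum_lessThan_if_split:
  fixes f g :: "nat \<Rightarrow> 'a::comm_monoid_add"
  assumes "k \<le> n"
  shows "(\<Sum>i<n. if i < k then f i else g i) = (\<Sum>i<k. f i) + (\<Sum>i\<in>{k..<n}. g i)"
proof -
  have "{..<n} = {..<k} \<union> {k..<n}" "{..<k} \<inter> {k..<n} = {}"
    using assms by auto
  then show ?thesis
    by (simp add: sum.union_disjoint)
qed

definition real_diag_mat :: "nat \<Rightarrow> (nat \<Rightarrow> real) \<Rightarrow> complex mat" where
  "real_diag_mat d f = mat d d (\<lambda>(a, b). if a = b then of_real (f a) else 0)"

lemma real_diag_mat_index:
  "a < d \<Longrightarrow> b < d \<Longrightarrow> real_diag_mat d f $$ (a, b) = (if a = b then of_real (f a) else 0)"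
  unfolding real_diag_mat_def by simp

lemma real_diag_mat_dim [simp]: "dim_row (real_diag_mat d f) = d" "dim_col (real_diag_mat d f) = d"
  unfolding real_diag_mat_def by simp_all

lemma real_diag_mat_cong: "(\<And>a. a < d \<Longrightarrow> f a = g a) \<Longrightarrow> real_diag_mat d f = real_diag_mat d g"
  by (intro eq_matI) (simp_all add: real_diag_mat_index)

lemma mtrace_real_diag_mat: "mtrace (real_diag_mat d f) = of_real (\<Sum>a<d. f a)"
  unfolding mtrace_def of_real_sum by (simp add: real_diag_mat_index)

lemma psd_real_diag_mat:
  assumes "\<And>a. a < d \<Longrightarrow> 0 \<le> f a"
  shows "psd d (real_diag_mat d f)"
  unfolding psd_iff_psd_kernel psd_kernel_def
proof (intro conjI allI impI)
  fix v
  have "quad_form d (\<lambda>a b. real_diag_mat d f $$ (a, b)) v = (\<Sum>a<d. of_real (f a) * (cnj (v a) * v a))"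
    unfolding quad_form_def
    by (intro sum.cong refl)
      (simp add: real_diag_mat_index if_distrib[of "times _"] if_distrib[of "\<lambda>x. x * _"] mult_ac cong: if_cong)
  then show "0 \<le> Re (quad_form d (\<lambda>a b. real_diag_mat d f $$ (a, b)) v)"
    using assms by (auto simp: cnj_mult_self Re_sum intro!: sum_nonneg simp flip: of_real_mult)
qed (simp_all add: real_diag_mat_index carrier_matI)

lemma measure_prepare_real_diag_mat:
  "measure_prepare d \<sigma> (real_diag_mat d f) = mat d d (\<lambda>(a, b). \<Sum>i<d. of_real (f i) * \<sigma> i $$ (a, b))"
  by (intro eq_matI) (simp_all add: measure_prepare_index real_diag_mat_index)

lemma measure_prepare_diagonal:
  assumes "\<And>i. i < d \<Longrightarrow> X $$ (i, i) = of_real (f i)"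
  shows "measure_prepare d (\<lambda>i. real_diag_mat d (g i)) X = real_diag_mat d (\<lambda>a. \<Sum>i<d. f i * g i a)"
proof (rule eq_matI)
  fix a b
  assume "a < dim_row (real_diag_mat d (\<lambda>a. \<Sum>i<d. f i * g i a))"
    "b < dim_col (real_diag_mat d (\<lambda>a. \<Sum>i<d. f i * g i a))"
  then show "measure_prepare d (\<lambda>i. real_diag_mat d (g i)) X $$ (a, b) =
      real_diag_mat d (\<lambda>a. \<Sum>i<d. f i * g i a) $$ (a, b)"
    using assms by (cases "a = b") (simp_all add: measure_prepare_index real_diag_mat_index)
qed simp_all

lemma unital_channel_doubly_stochastic:
  assumes "\<And>i a. i < d \<Longrightarrow> a < d \<Longrightarrow> 0 \<le> g i a"
    and "\<And>i. i < d \<Longrightarrow> (\<Sum>a<d. g i a) = 1" and "\<And>a. a < d \<Longrightarrow> (\<Sum>i<d. g i a) = 1"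
  shows "unital_channel d (measure_prepare d (\<lambda>i. real_diag_mat d (g i)))"
proof (rule unital_channel_measure_prepare)
  fix a b
  assume "a < d" "b < d"
  then show "(\<Sum>i<d. real_diag_mat d (g i) $$ (a, b)) = (if a = b then 1 else 0)"
    using assms(3) by (cases "a = b") (simp_all add: real_diag_mat_index flip: of_real_sum)
qed (use assms in \<open>simp_all add: psd_real_diag_mat mtrace_real_diag_mat\<close>)

lemma basis_proj_eq: "basis_proj d i = real_diag_mat d (\<lambda>a. if a = i then 1 else 0)"
  by (intro eq_matI) (auto simp: basis_proj_def real_diag_mat_index)

lemma basis_proj_index: "a < d \<Longrightarrow> b < d \<Longrightarrow> basis_proj d i $$ (a, b) = (if a = b \<and> a = i then 1 else 0)"
  unfolding basis_proj_def by auto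

lemma psd_basis_proj: "psd d (basis_proj d i)"
  unfolding basis_proj_eq by (rule psd_real_diag_mat) simp

lemma unital_channel_basis_proj_diag:
  assumes E: "unital_channel d E" and "a < d"
  shows "0 \<le> Re (E (basis_proj d i) $$ (a, a))" and "(\<Sum>i<d. Re (E (basis_proj d i) $$ (a, a))) = 1"
proof -
  have lin: "linear_on d E" and cp: "completely_positive d E"
    using E unfolding unital_channel_def by blast+
  have "psd d (E (basis_proj d i))"
    using completely_positive_psd[OF cp lin psd_basis_proj] .
  then show "0 \<le> Re (E (basis_proj d i) $$ (a, a))"
    unfolding psd_iff_psd_kernel using psd_kernel_diag(2) \<open>a < d\<close> by blast
  have "Pi_k d d = 1\<^sub>m d"
    by (intro eq_matI) (auto simp: Pi_k_def basis_proj_index)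
  then have "E (Pi_k d d) $$ (a, a) = 1"
    using E \<open>a < d\<close> unfolding unital_channel_def unital_def by simp
  then show "(\<Sum>i<d. Re (E (basis_proj d i) $$ (a, a))) = 1"
    unfolding linear_on_Pi_k_index[OF lin \<open>a < d\<close> \<open>a < d\<close>] by (simp flip: Re_sum)
qed

lemma C_set_eq: "C_set d k = {real_diag_mat d (\<lambda>a. if a < k then 1 / real k else 0)}"
proof -
  have "(1 / of_nat k) \<cdot>\<^sub>m Pi_k d k = real_diag_mat d (\<lambda>a. if a < k then 1 / real k else 0)"
    by (intro eq_matI) (auto simp: Pi_k_def basis_proj_index real_diag_mat_index)
  then show ?thesis
    unfolding C_set_def by simp
qed

lemma C2_set_eq:
  "C2_set d k = {real_diag_mat d (\<lambda>a. if a < k then p a else 0) | p. (\<forall>i<k. 0 \<le> p i) \<and> (\<Sum>i<k. p i) = 1}"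
proof -
  have "mat d d (\<lambda>(a, b). \<Sum>i<k. complex_of_real (p i) * basis_proj d i $$ (a, b)) =
      real_diag_mat d (\<lambda>a. if a < k then p a else 0)" for p
    by (intro eq_matI)
      (auto simp: basis_proj_index real_diag_mat_index if_distrib[of "times _"] cong: if_cong)
  then show ?thesis
    unfolding C2_set_def by simp
qed

lemma C2_set_mono:
  assumes "k \<le> k'"
  shows "C2_set d k \<subseteq> C2_set d k'"
proof
  fix X
  assume "X \<in> C2_set d k"
  then obtain p where p: "\<forall>i<k. 0 \<le> p i" "(\<Sum>i<k. p i) = 1"
    and X: "X = real_diag_mat d (\<lambda>a. if a < k then p a else 0)"
    unfolding C2_set_eq by blast
  define q where "q a = (if a < k then p a else 0)" for a
  have "X = real_diag_mat d (\<lambda>a. if a < k' then q a else 0)"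
    unfolding X q_def using assms by (intro real_diag_mat_cong) auto
  moreover have "\<forall>i<k'. 0 \<le> q i" "(\<Sum>i<k'. q i) = 1"
    using p sum_lessThan_if_split[OF assms, of p "\<lambda>_. 0"] by (auto simp: q_def)
  ultimately show "X \<in> C2_set d k'"
    unfolding C2_set_eq by blast
qed

lemma C2_set_subset_density_ops:
  assumes "k \<le> d"
  shows "C2_set d k \<subseteq> density_ops d"
proof
  fix X
  assume "X \<in> C2_set d k"
  then obtain p where p: "\<forall>i<k. 0 \<le> p i" "(\<Sum>i<k. p i) = 1"
    and X: "X = real_diag_mat d (\<lambda>a. if a < k then p a else 0)"
    unfolding C2_set_eq by blast
  have "psd d X"
    unfolding X using p by (intro psd_real_diag_mat) auto
  moreover have "mtrace X = 1"
    unfolding X mtrace_real_diag_mat using p sum_lessThan_if_split[OF assms, of p "\<lambda>_. 0"] by simp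
  ultimately show "X \<in> density_ops d"
    unfolding density_ops_def by blast
qed

lemma basis_proj_in_C2_set:
  assumes "i < k"
  shows "basis_proj d i \<in> C2_set d k"
proof -
  have "basis_proj d i = real_diag_mat d (\<lambda>a. if a < k then if a = i then 1 else 0 else 0)"
    unfolding basis_proj_eq using assms by (intro real_diag_mat_cong) auto
  moreover have "(\<Sum>a<k. if a = i then 1 else 0 :: real) = 1"
    using assms by simp
  ultimately show ?thesis
    unfolding C2_set_eq by force
qed

lemma C_set_subset_C2_set:
  assumes "1 \<le> k"
  shows "C_set d k \<subseteq> C2_set d k"
  using assms unfolding C_set_eq C2_set_eq by force

section \<open>Transformations between the sets\<close>

lemma transforms_density_ops_C2_set: "transforms d (density_ops d) (C2_set d d)"
proof -
  define g :: "nat \<Rightarrow> nat \<Rightarrow> real" where "g i a = (if a = i then 1 else 0)" for i a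
  have "measure_prepare d (\<lambda>i. real_diag_mat d (g i)) X \<in> C2_set d d" if "X \<in> density_ops d" for X
  proof -
    have psd: "psd_kernel d (\<lambda>a b. X $$ (a, b))" and "mtrace X = 1" "dim_row X = d"
      using that by (auto simp: density_ops_def psd_iff_psd_kernel)
    then have "(\<Sum>i<d. Re (X $$ (i, i))) = 1"
      by (simp add: mtrace_def flip: Re_sum)
    moreover have "measure_prepare d (\<lambda>i. real_diag_mat d (g i)) X =
        real_diag_mat d (\<lambda>a. if a < d then Re (X $$ (a, a)) else 0)"
      using psd_kernel_diag(1)[OF psd]
      by (subst measure_prepare_diagonal[of d X "\<lambda>i. Re (X $$ (i, i))"])
        (auto simp: g_def if_distrib[of "times _"] cong: if_cong intro!: real_diag_mat_cong)
    ultimately show ?thesis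
      unfolding C2_set_eq mem_Collect_eq using psd_kernel_diag(2)[OF psd]
      by (intro exI[of _ "\<lambda>a. Re (X $$ (a, a))"]) auto
  qed
  moreover have "unital_channel d (measure_prepare d (\<lambda>i. real_diag_mat d (g i)))"
    by (rule unital_channel_doubly_stochastic) (simp_all add: g_def)
  ultimately show ?thesis
    unfolding transforms_def by blast
qed

lemma transforms_C2_set_C_set:
  assumes "1 \<le> k" "k \<le> d"
  shows "transforms d (C2_set d k) (C_set d k)"
proof -
  \<comment> \<open>average over the first k basis states, identity on the others\<close>
  define g :: "nat \<Rightarrow> nat \<Rightarrow> real"
    where "g i a = (if i < k then if a < k then 1 / real k else 0 else if a = i then 1 else 0)" for i a
  have "unital_channel d (measure_prepare d (\<lambda>i. real_diag_mat d (g i)))"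
  proof (rule unital_channel_doubly_stochastic)
    fix i
    assume "i < d"
    show "(\<Sum>a<d. g i a) = 1"
      using assms \<open>i < d\<close> sum_lessThan_if_split[OF assms(2), of "\<lambda>_. 1 / real k" "\<lambda>_. 0"]
      by (cases "i < k") (simp_all add: g_def)
  next
    fix a
    assume "a < d"
    show "(\<Sum>i<d. g i a) = 1"
      using assms \<open>a < d\<close> sum_lessThan_if_split[OF assms(2), of "\<lambda>_. 1 / real k" "\<lambda>i. if a = i then 1 else 0"]
        sum_lessThan_if_split[OF assms(2), of "\<lambda>_. 0" "\<lambda>i. if a = i then 1 else 0"]
      by (cases "a < k") (simp_all add: g_def)
  qed (simp add: g_def)
  moreover have "measure_prepare d (\<lambda>i. real_diag_mat d (g i)) X \<in> C_set d k" if "X \<in> C2_set d k" for X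
  proof -
    from \<open>X \<in> C2_set d k\<close> obtain p
      where "(\<Sum>i<k. p i) = 1" and X: "X = real_diag_mat d (\<lambda>a. if a < k then p a else 0)"
      unfolding C2_set_eq by blast
    have weights: "(\<Sum>i<d. (if i < k then p i else 0) * g i a) = (if a < k then 1 / real k else 0)" for a
    proof -
      have "(\<Sum>i<d. (if i < k then p i else 0) * g i a) = (\<Sum>i<d. if i < k then p i * g i a else 0)"
        by (intro sum.cong) auto
      also have "\<dots> = (\<Sum>i<k. p i * (if a < k then 1 / real k else 0))"
        unfolding sum_lessThan_if_split[OF assms(2)] by (simp add: g_def)
      finally show ?thesis
        using \<open>(\<Sum>i<k. p i) = 1\<close> by (simp flip: sum_distrib_right)
    qed
    have "measure_prepare d (\<lambda>i. real_diag_mat d (g i)) X =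
        real_diag_mat d (\<lambda>a. \<Sum>i<d. (if i < k then p i else 0) * g i a)"
      by (rule measure_prepare_diagonal) (simp add: X real_diag_mat_index)
    then show ?thesis
      unfolding C_set_eq weights by simp
  qed
  ultimately show ?thesis
    unfolding transforms_def by blast
qed

definition complement_state :: "nat \<Rightarrow> complex mat \<Rightarrow> complex mat" where
  "complement_state d \<sigma> = mat d d (\<lambda>(a, b). ((if a = b then 1 else 0) - \<sigma> $$ (a, b)) / of_nat (d - 1))"

lemma psd_complement_state:
  assumes "\<sigma> \<in> density_ops d"
  shows "psd d (complement_state d \<sigma>)"
proof -
  have "psd_kernel d (\<lambda>a b. complement_state d \<sigma> $$ (a, b))"
    using psd_kernel_scale[OF psd_kernel_id_minus_density[OF assms], of "1 / real (d - 1)"]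
    by (rule psd_kernel_cong) (simp_all add: complement_state_def)
  then show ?thesis
    by (simp add: psd_iff_psd_kernel complement_state_def)
qed

lemma mtrace_complement_state:
  assumes "\<sigma> \<in> density_ops d" and "2 \<le> d"
  shows "mtrace (complement_state d \<sigma>) = 1"
proof -
  have "mtrace \<sigma> = 1" "\<sigma> \<in> carrier_mat d d"
    using assms(1) by (auto simp: density_ops_def psd_def)
  have "mtrace (complement_state d \<sigma>) = (\<Sum>a<d. (1 - \<sigma> $$ (a, a)) / of_nat (d - 1))"
    by (simp add: complement_state_def mtrace_def)
  also have "\<dots> = (\<Sum>a<d. 1 - \<sigma> $$ (a, a)) / of_nat (d - 1)"
    by (rule sum_divide_distrib[symmetric])
  also have "(\<Sum>a<d. 1 - \<sigma> $$ (a, a)) = of_nat d - 1"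
    using \<open>mtrace \<sigma> = 1\<close> \<open>\<sigma> \<in> carrier_mat d d\<close> by (simp add: sum_subtractf mtrace_def)
  also have "(of_nat d - 1 :: complex) = of_nat (d - 1)"
    using assms(2) by (simp add: of_nat_diff)
  finally show ?thesis
    using assms(2) by simp
qed

lemma density_plus_complement_state:
  assumes "\<sigma> \<in> density_ops d" "a < d" "b < d"
  shows "\<sigma> $$ (a, b) + of_nat (d - 1) * complement_state d \<sigma> $$ (a, b) = (if a = b then 1 else 0)"
proof (cases "d = 1")
  case True
  moreover have "\<sigma> $$ (0, 0) = 1" "a = 0" "b = 0"
    using assms True by (auto simp: density_ops_def psd_def mtrace_def)
  ultimately show ?thesis
    by simp
next
  case False
  then show ?thesis
    using assms(2,3) by (simp add: complement_state_def)
qed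

lemma transforms_C2_set_one_state:
  assumes "\<sigma> \<in> density_ops d"
  shows "transforms d (C2_set d 1) {\<sigma>}"
proof -
  have "psd d \<sigma>" "mtrace \<sigma> = 1" and \<sigma>_carrier: "\<sigma> \<in> carrier_mat d d"
    using assms by (auto simp: density_ops_def psd_def)
  then obtain d' where d: "d = Suc d'"
    by (cases d) (auto simp: mtrace_def)
  define \<tau> where "\<tau> i = (if i = 0 then \<sigma> else complement_state d \<sigma>)" for i :: nat
  have "unital_channel d (measure_prepare d \<tau>)"
  proof (rule unital_channel_measure_prepare)
    fix a b
    assume "a < d" "b < d"
    have "(\<Sum>i<d. \<tau> i $$ (a, b)) = \<sigma> $$ (a, b) + of_nat (d - 1) * complement_state d \<sigma> $$ (a, b)"
      unfolding d sum.lessThan_Suc_shift by (simp add: \<tau>_def d)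
    then show "(\<Sum>i<d. \<tau> i $$ (a, b)) = (if a = b then 1 else 0)"
      using density_plus_complement_state[OF assms \<open>a < d\<close> \<open>b < d\<close>] by simp
  qed (use assms \<open>psd d \<sigma>\<close> \<open>mtrace \<sigma> = 1\<close> in
      \<open>auto simp: \<tau>_def psd_complement_state mtrace_complement_state\<close>)
  moreover have "measure_prepare d \<tau> X = \<sigma>" if "X \<in> C2_set d 1" for X
  proof -
    from that obtain p where "p 0 = 1" and X: "X = real_diag_mat d (\<lambda>a. if a < 1 then p a else 0)"
      unfolding C2_set_eq by auto
    then show ?thesis
      unfolding X measure_prepare_real_diag_mat d sum.lessThan_Suc_shift
      by (intro eq_matI) (use \<sigma>_carrier in \<open>simp_all add: d \<tau>_def\<close>)
  qed
  ultimately show ?thesis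
    unfolding transforms_def by blast
qed

lemma not_transforms_C2_set:
  assumes "k < k'" "k' \<le> d"
  shows "\<not> transforms d (C2_set d k') (C2_set d k)"
proof
  assume "transforms d (C2_set d k') (C2_set d k)"
  then obtain E where E: "unital_channel d E" and maps: "\<forall>\<rho>\<in>C2_set d k'. E \<rho> \<in> C2_set d k"
    unfolding transforms_def by blast
  define e where "e i a = Re (E (basis_proj d i) $$ (a, a))" for i a
  have row: "(\<Sum>a<k. e i a) = 1" if "i < k'" for i
  proof -
    have "E (basis_proj d i) \<in> C2_set d k"
      using maps basis_proj_in_C2_set[OF that] by blast
    then obtain p where "(\<Sum>a<k. p a) = 1"
      and "E (basis_proj d i) = real_diag_mat d (\<lambda>a. if a < k then p a else 0)"
      unfolding C2_set_eq by blast
    then show ?thesis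
      using assms by (simp add: e_def real_diag_mat_index)
  qed
  have "real k' = (\<Sum>i<k'. \<Sum>a<k. e i a)"
    using row by simp
  also have "\<dots> = (\<Sum>a<k. \<Sum>i<k'. e i a)"
    by (rule sum.swap)
  also have "\<dots> \<le> (\<Sum>a<k. \<Sum>i<d. e i a)"
    using assms unital_channel_basis_proj_diag(1)[OF E] by (intro sum_mono sum_mono2) (auto simp: e_def)
  also have "\<dots> = real k"
    using assms unital_channel_basis_proj_diag(2)[OF E] by (simp add: e_def)
  finally show False
    using assms(1) by simp
qed

text \<open>\<Omega> plays the role of C_2^d.\<close>

definition Cur2_rank :: "nat \<Rightarrow> complex mat set \<Rightarrow> nat \<Rightarrow> bool" where
  "Cur2_rank d C k \<longleftrightarrow> k \<in> {1..d} \<and> (C = C2_set d k \<or> C = density_ops d \<and> k = d)"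

lemma transforms_Cur2_rank_iff:
  assumes C: "Cur2_rank d C k" and C': "Cur2_rank d C' k'"
  shows "transforms d C' C \<longleftrightarrow> k' \<le> k"
proof
  have "C2_set d k' \<subseteq> C'"
    using C' C2_set_subset_density_ops by (auto simp: Cur2_rank_def)
  moreover assume "transforms d C' C"
  ultimately have "transforms d (C2_set d k') C"
    using transforms_mono by blast
  then show "k' \<le> k"
    using C C' not_transforms_C2_set[of k k' d] by (cases "k < k'") (auto simp: Cur2_rank_def)
next
  assume "k' \<le> k"
  have "transforms d C' (C2_set d k')"
    using C' transforms_density_ops_C2_set transforms_subset by (auto simp: Cur2_rank_def)
  moreover have "C2_set d k' \<subseteq> C2_set d k"
    using \<open>k' \<le> k\<close> by (rule C2_set_mono)
  moreover have "C2_set d k \<subseteq> C"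
    using C C2_set_subset_density_ops[of d d] unfolding Cur2_rank_def by auto
  ultimately show "transforms d C' C"
    using transforms_mono by blast
qed

lemma Cur2_obtain_rank:
  assumes "C \<in> Cur2 d" "1 \<le> d"
  obtains k where "Cur2_rank d C k"
proof -
  consider k where "k \<in> {1..d}" "C = C2_set d k" | "C = density_ops d"
    using assms(1) unfolding Cur2_def by blast
  then show thesis
    by cases (use assms(2) that in \<open>auto simp: Cur2_rank_def\<close>)
qed

lemma is_currency_Cur2:
  assumes "1 \<le> d"
  shows "is_currency d (Cur2 d) (S_Omega d)"
  unfolding is_currency_def
proof (intro conjI ballI)
  have "C2_set d k \<in> S_Omega d" if "k \<in> {1..d}" for k
    using that basis_proj_in_C2_set[of 0 k d] C2_set_subset_density_ops[of k d] unfolding S_Omega_def by auto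
  moreover have "density_ops d \<in> S_Omega d"
    using calculation[of d] assms unfolding S_Omega_def by auto
  ultimately show "Cur2 d \<subseteq> S_Omega d" "density_ops d \<in> S_Omega d"
    unfolding Cur2_def by auto
next
  fix C C'
  assume "C \<in> Cur2 d" "C' \<in> Cur2 d"
  with assms obtain k k' where "Cur2_rank d C k" "Cur2_rank d C' k'"
    by (metis Cur2_obtain_rank)
  then show "transforms d C C' \<or> transforms d C' C"
    using transforms_Cur2_rank_iff nat_le_linear by blast
next
  show "density_ops d \<in> Cur2 d"
    unfolding Cur2_def by simp
next
  fix V
  assume "V \<in> S_Omega d"
  then obtain \<sigma> where "\<sigma> \<in> V" "V \<subseteq> density_ops d"
    unfolding S_Omega_def by auto
  then have "transforms d (C2_set d 1) V" "transforms d V (density_ops d)"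
    using transforms_C2_set_one_state transforms_mono transforms_subset by blast+
  moreover have "C2_set d 1 \<in> Cur2 d" "density_ops d \<in> Cur2 d"
    unfolding Cur2_def using assms by auto
  ultimately show "\<exists>C\<in>Cur2 d. \<exists>C'\<in>Cur2 d. transforms d C V \<and> transforms d V C'"
    by blast
qed

lemma is_value_function_Cur2:
  assumes "1 \<le> d" and "Val (density_ops d) = 0"
    and "\<forall>k\<in>{1..d}. Val (C2_set d k) = log 2 (real d) - log 2 (real k)"
  shows "is_value_function d (Cur2 d) Val"
proof -
  have Val: "Val C = log 2 (real d) - log 2 (real k)" if "Cur2_rank d C k" for C k
    using that assms by (auto simp: Cur2_rank_def)
  show ?thesis
    unfolding is_value_function_def
  proof (intro conjI ballI)
    fix C
    assume "C \<in> Cur2 d"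
    then obtain k where "Cur2_rank d C k"
      using assms(1) by (rule Cur2_obtain_rank)
    then show "0 \<le> Val C"
      using Val by (simp add: Cur2_rank_def)
  next
    fix C C'
    assume "C \<in> Cur2 d" "C' \<in> Cur2 d"
    with assms(1) obtain k k' where k: "Cur2_rank d C k" and k': "Cur2_rank d C' k'"
      by (metis Cur2_obtain_rank)
    then show "Val C \<le> Val C' \<longleftrightarrow> transforms d C' C"
      using Val[OF k] Val[OF k'] transforms_Cur2_rank_iff[OF k k'] by (simp add: Cur2_rank_def)
  qed (fact assms(2))
qed

theorem mainTheorem16:
  fixes d :: nat
  assumes "1 \<le> d"
  shows "(\<forall>k \<in> {1..d}. transforms d (C_set d k) (C2_set d k) \<and> transforms d (C2_set d k) (C_set d k))
     \<and> is_currency d (Cur2 d) (S_Omega d)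
     \<and> (\<forall>Val. Val (density_ops d) = 0 \<and>
              (\<forall>k \<in> {1..d}. Val (C2_set d k) = log 2 (real d) - log 2 (real k))
           \<longrightarrow> is_value_function d (Cur2 d) Val)"
  using transforms_subset[OF C_set_subset_C2_set] transforms_C2_set_C_set
    is_currency_Cur2[OF assms] is_value_function_Cur2[OF assms] by auto

end
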